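(* Assume $a_1,\dots,a_N,c_1,c_2>0$ with $a_ia_j<1$, $a_ic_1<1$, $a_ic_2<1$ for all $i,j$, and additionally $c_1c_2<1$. For any down-right path $\mathcal P$ in the strip and any fixed $\lambda_1^{(0)}\in\mathbb Z$, the quantity $$Z_{\mathrm{Geo}}=\sum_{\lambda_i^{(j)}\in\mathbb Z,\,(i,j)\neq(1,0)}\mathrm{wt}^{\mathcal{GP}}(\boldsymbol\lambda)$$ (sum over $i\in\{1,2\}$, $0\le j\le N$, $(i,j)\ne(1,0)$) is finite and does not depend on the choice of $\mathcal P$ nor of $\lambda_1^{(0)}$.
   Context: Fix $N\ge1$; extend $a_{j+kN}=a_j$. The strip is $\{(n,m)\in\mathbb Z^2:0\le m\le n\le m+N\}$. A down-right path is a sequence of vertices $\mathbf p_0,\dots,\mathbf p_N$ of the strip with $\mathbf p_0=(m_0,m_0)$ and each step $\mathbf p_j-\mathbf p_{j-1}\in\{(1,0),(0,-1)\}$ (so $\mathbf p_N$ is of the form $(m+N,m)$). Its edge $\mathsf e_j$ from $\mathbf p_{j-1}$ to $\mathbf p_j$ carries the label $\ell_j$: a horizontal edge $(n-1,m)\to(n,m)$ is labelled $a_n$, a vertical edge between $(n,m-1)$ and $(n,m)$ is labelled $a_m$. For $1\le j\le N$ set $(\mathrm{up}(j),\mathrm{low}(j))=(j,j-1)$ if $\mathsf e_j$ is horizontal and $(j-1,j)$ if $\mathsf e_j$ is vertical. For $\boldsymbol\lambda=(\lambda_i^{(j)})_{i\in\{1,2\},0\le j\le N}\in\mathbb Z^{2N+2}$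 define the two-layer Gibbs weight $$\mathrm{wt}^{\mathcal{GP}}(\boldsymbol\lambda)=c_1^{\lambda_1^{(0)}-\lambda_2^{(0)}}c_2^{\lambda_1^{(N)}-\lambda_2^{(N)}}\prod_{j=1}^N\Big[\prod_{i=1}^2\ell_j^{\lambda_i^{(\mathrm{up}(j))}-\lambda_i^{(\mathrm{low}(j))}}\mathbf 1\{\lambda_i^{(\mathrm{up}(j))}\ge\lambda_i^{(\mathrm{low}(j))}\}\Big]\mathbf 1\{\lambda_1^{(\mathrm{low}(j))}\ge\lambda_2^{(\mathrm{up}(j))}\}.$$ *)

theory Defs
  imports "HOL-Analysis.Analysis"
begin

definition in_strip :: "nat \<Rightarrow> int \<times> int \<Rightarrow> bool" where
  "in_strip N v \<longleftrightarrow> 0 \<le> snd v \<and> snd v \<le> fst v \<and> fst v \<le> snd v + int N"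

definition is_horiz :: "(nat \<Rightarrow> int \<times> int) \<Rightarrow> nat \<Rightarrow> bool" where
  "is_horiz p j \<longleftrightarrow> fst (p j) = fst (p (j - 1)) + 1 \<and> snd (p j) = snd (p (j - 1))"

definition is_vert :: "(nat \<Rightarrow> int \<times> int) \<Rightarrow> nat \<Rightarrow> bool" where
  "is_vert p j \<longleftrightarrow> fst (p j) = fst (p (j - 1)) \<and> snd (p j) = snd (p (j - 1)) - 1"

text \<open>A down-right path p_0, ..., p_N in the strip (only the values at 0..N matter).\<close>
definition down_right_path :: "nat \<Rightarrow> (nat \<Rightarrow> int \<times> int) \<Rightarrow> bool" where
  "down_right_path N p \<longleftrightarrow>
     (\<exists>m0. p 0 = (m0, m0)) \<and>
     (\<forall>j\<in>{1..N}. is_horiz p j \<or> is_vert p j) \<and>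
     (\<forall>j\<le>N. in_strip N (p j))"

definition edge_label :: "(int \<Rightarrow> real) \<Rightarrow> (nat \<Rightarrow> int \<times> int) \<Rightarrow> nat \<Rightarrow> real" where
  "edge_label a p j = (if is_horiz p j then a (fst (p j)) else a (snd (p (j - 1))))"

definition up_idx :: "(nat \<Rightarrow> int \<times> int) \<Rightarrow> nat \<Rightarrow> nat" where
  "up_idx p j = (if is_horiz p j then j else j - 1)"

definition low_idx :: "(nat \<Rightarrow> int \<times> int) \<Rightarrow> nat \<Rightarrow> nat" where
  "low_idx p j = (if is_horiz p j then j - 1 else j)"

definition ind :: "bool \<Rightarrow> real" where
  "ind b = (if b then 1 else 0)"

text \<open>Two-layer Gibbs weight; lam i j stands for lambda_i^(j).\<close>
definition wt_GP :: "nat \<Rightarrow> (int \<Rightarrow> real) \<Rightarrow> real \<Rightarrow> real \<Rightarrow> (nat \<Rightarrow> int \<times> int)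
                    \<Rightarrow> (nat \<Rightarrow> nat \<Rightarrow> int) \<Rightarrow> real" where
  "wt_GP N a c1 c2 p lam =
     c1 powi (lam 1 0 - lam 2 0) * c2 powi (lam 1 N - lam 2 N) *
     (\<Prod>j\<in>{1..N}.
        (\<Prod>i\<in>{1,2}. edge_label a p j powi (lam i (up_idx p j) - lam i (low_idx p j))
                      * ind (lam i (up_idx p j) \<ge> lam i (low_idx p j)))
        * ind (lam 1 (low_idx p j) \<ge> lam 2 (up_idx p j)))"

text \<open>Configurations (lambda_i^(j))_{i in {1,2}, 0<=j<=N} with lambda_1^(0) = x fixed;
  entries outside the index range are normalised to 0, so this set is in bijection
  with Z^(2N+1).\<close>
definition configs :: "nat \<Rightarrow> int \<Rightarrow> (nat \<Rightarrow> nat \<Rightarrow> int) set" where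
  "configs N x = {lam. lam 1 0 = x \<and> (\<forall>i j. (i \<notin> {1,2} \<or> j > N) \<longrightarrow> lam i j = 0)}"

end

(*
  The weight factorises along the path: besides the boundary factors c1^(gap of layer 0) and
  c2^(gap of layer N), edge j contributes a factor depending only on the consecutive layers
  lambda^(j-1) and lambda^(j), and invariant under translating both.  Summing out the layers
  from the last one backwards, every partial sum therefore depends only on the gap
  d = lambda_1 - lambda_2, and the edge with label alpha acts on it by the kernel
  K_alpha(d, e) = sum_(s <= min d e) alpha^(d-s) alpha^(e-s), for horizontal and vertical
  edges alike (the two are exchanged by the reflection (u, w) -> (-w, -u) of a layer).
  With the lower triangular Toeplitz matrix A_alpha one has K_alpha = A_alpha A_alpha^T, and
  A_alpha^T A_beta differs from A_beta A_alpha^T by a rank one term; this makes the kernel of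
  K_alpha K_beta symmetric in alpha and beta.  So the transfer operators commute (on sequences
  of growth at most rho^d, where all sums converge), Z depends only on the multiset of labels
  along the path, and by periodicity that multiset is {a_1, ..., a_N} for every path.
*)

theory Submission
  imports Defs
begin

section \<open>Nonnegative double series\<close>

lemma has_sum_Sigma_nonneg:
  fixes f :: "'a \<times> 'b \<Rightarrow> real"
  assumes "\<And>x y. x \<in> A \<Longrightarrow> y \<in> B x \<Longrightarrow> 0 \<le> f (x, y)"
    and "\<And>x. x \<in> A \<Longrightarrow> ((\<lambda>y. f (x, y)) has_sum g x) (B x)"
    and "(g has_sum S) A"
  shows "(f has_sum S) (Sigma A B)"
proof -
  have "f summable_on Sigma A B"
    using assms by (intro summable_on_SigmaI[where g = g]) (auto dest: has_sum_imp_summable)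
  with assms show ?thesis
    by (intro has_sum_SigmaI[where g = g]) auto
qed

lemma has_sum_swap_nonneg:
  fixes f :: "'a \<times> 'b \<Rightarrow> real"
  assumes "\<And>x y. 0 \<le> f (x, y)"
    and "\<And>x. ((\<lambda>y. f (x, y)) has_sum g x) UNIV" and "(g has_sum S) UNIV"
    and "\<And>y. ((\<lambda>x. f (x, y)) has_sum h y) UNIV"
  shows "(h has_sum S) UNIV"
proof -
  have "(f has_sum S) (UNIV \<times> UNIV)"
    using assms(1-3) by (intro has_sum_Sigma_nonneg) auto
  then have "((\<lambda>(y, x). f (x, y)) has_sum S) (UNIV \<times> UNIV)"
    by (subst (asm) has_sum_swap) simp
  then show ?thesis
    by (rule has_sum_SigmaD) (use assms(4) in auto)
qed

lemma has_sum_sum_finite: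
  fixes f :: "'i \<Rightarrow> 'a \<Rightarrow> real"
  assumes "finite I" and "\<And>i. i \<in> I \<Longrightarrow> (f i has_sum s i) A"
  shows "((\<lambda>x. \<Sum>i\<in>I. f i x) has_sum (\<Sum>i\<in>I. s i)) A"
  using assms by (induction I rule: finite_induct) (auto intro: has_sum_add)

lemma has_sum_geometric_shifted:
  fixes q :: real
  assumes "0 \<le> q" and "q < 1"
  shows "((\<lambda>n. if m \<le> n then q ^ (n - m) else 0) has_sum 1 / (1 - q)) UNIV"
proof -
  have "((\<lambda>n. q ^ n) has_sum 1 / (1 - q)) UNIV"
    using assms geometric_sums[of q] by (intro sums_nonneg_imp_has_sum) auto
  also have "?this \<longleftrightarrow> ((\<lambda>n. q ^ (n - m)) has_sum 1 / (1 - q)) {m..}"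
    by (rule has_sum_reindex_bij_witness[where j = "\<lambda>n. n + m" and i = "\<lambda>n. n - m"]) auto
  also have "\<dots> \<longleftrightarrow> ?thesis"
    by (rule has_sum_cong_neutral) auto
  finally show ?thesis .
qed

section \<open>Toeplitz kernels\<close>

text \<open>In matrix notation, with \<open>A\<^sub>\<alpha> = tri_pow \<alpha>\<close>: \<open>transfer_kernel \<alpha> = A\<^sub>\<alpha> A\<^sub>\<alpha>\<^sup>T\<close>,
  \<open>tri_prod \<alpha> \<beta> = A\<^sub>\<alpha> A\<^sub>\<beta>\<close>, and \<open>transfer_kernel_comp \<alpha> \<beta>\<close> is the kernel of
  \<open>A\<^sub>\<alpha> (A\<^sub>\<alpha>\<^sup>T A\<^sub>\<beta>) A\<^sub>\<beta>\<^sup>T\<close> after splitting \<open>A\<^sub>\<alpha>\<^sup>T A\<^sub>\<beta>\<close> into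
  \<open>A\<^sub>\<beta> A\<^sub>\<alpha>\<^sup>T\<close> plus a rank one term (\<open>geometric_gram_decomp\<close>).\<close>

definition tri_pow :: "real \<Rightarrow> nat \<Rightarrow> nat \<Rightarrow> real" where
  "tri_pow \<alpha> d s = (if s \<le> d then \<alpha> ^ (d - s) else 0)"

definition transfer_kernel :: "real \<Rightarrow> nat \<Rightarrow> nat \<Rightarrow> real" where
  "transfer_kernel \<alpha> d e = (\<Sum>s\<le>d. tri_pow \<alpha> d s * tri_pow \<alpha> e s)"

definition tri_prod :: "real \<Rightarrow> real \<Rightarrow> nat \<Rightarrow> nat \<Rightarrow> real" where
  "tri_prod \<alpha> \<beta> d t = (\<Sum>s\<le>d. tri_pow \<alpha> d s * tri_pow \<beta> s t)"

definition transfer_kernel_comp :: "real \<Rightarrow> real \<Rightarrow> nat \<Rightarrow> nat \<Rightarrow> real" where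
  "transfer_kernel_comp \<alpha> \<beta> d f = (\<Sum>t\<le>d. tri_prod \<alpha> \<beta> d t * tri_prod \<beta> \<alpha> f t)
     + \<alpha> * \<beta> / (1 - \<alpha> * \<beta>) * (tri_prod \<alpha> \<beta> d 0 * tri_prod \<beta> \<alpha> f 0)"

lemma tri_pow_nonneg: "0 \<le> \<alpha> \<Longrightarrow> 0 \<le> tri_pow \<alpha> d s"
  by (simp add: tri_pow_def)

lemma tri_pow_0 [simp]: "tri_pow \<alpha> d 0 = \<alpha> ^ d"
  by (simp add: tri_pow_def)

lemma transfer_kernel_nonneg: "0 \<le> \<alpha> \<Longrightarrow> 0 \<le> transfer_kernel \<alpha> d e"
  by (simp add: transfer_kernel_def tri_pow_nonneg sum_nonneg)

lemma transfer_kernel_eq_sum_atMost: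
  assumes "min d e \<le> n"
  shows "transfer_kernel \<alpha> d e = (\<Sum>s\<le>n. tri_pow \<alpha> d s * tri_pow \<alpha> e s)"
proof -
  have "transfer_kernel \<alpha> d e = (\<Sum>s\<le>min d e. tri_pow \<alpha> d s * tri_pow \<alpha> e s)"
    unfolding transfer_kernel_def by (rule sum.mono_neutral_right) (auto simp: tri_pow_def)
  also have "\<dots> = (\<Sum>s\<le>n. tri_pow \<alpha> d s * tri_pow \<alpha> e s)"
    by (rule sum.mono_neutral_left) (use assms in \<open>auto simp: tri_pow_def\<close>)
  finally show ?thesis .
qed

text \<open>The exponents \<open>r - s\<close> and \<open>s - r\<close> are truncated subtractions on \<open>nat\<close>, so at most one
  of the two powers is nontrivial.\<close>

lemma has_sum_tri_pow_mult:
  assumes "0 \<le> \<alpha>" and "0 \<le> \<beta>" and "\<alpha> * \<beta> < 1"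
  shows "((\<lambda>e. tri_pow \<alpha> e s * tri_pow \<beta> e r) has_sum \<alpha> ^ (r - s) * \<beta> ^ (s - r) / (1 - \<alpha> * \<beta>)) UNIV"
proof -
  define m where "m = max s r"
  have "tri_pow \<alpha> e s * tri_pow \<beta> e r
      = \<alpha> ^ (r - s) * \<beta> ^ (s - r) * (if m \<le> e then (\<alpha> * \<beta>) ^ (e - m) else 0)" for e
  proof (cases "m \<le> e")
    case True
    then have "e - s = (r - s) + (e - m)" "e - r = (s - r) + (e - m)"
      by (auto simp: m_def)
    then have "\<alpha> ^ (e - s) = \<alpha> ^ (r - s) * \<alpha> ^ (e - m)" "\<beta> ^ (e - r) = \<beta> ^ (s - r) * \<beta> ^ (e - m)"
      by (simp_all add: power_add)
    with True show ?thesis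
      by (simp add: tri_pow_def m_def power_mult_distrib)
  qed (auto simp: tri_pow_def m_def)
  with has_sum_cmult_right[OF has_sum_geometric_shifted[of "\<alpha> * \<beta>" m], of "\<alpha> ^ (r - s) * \<beta> ^ (s - r)"]
  show ?thesis
    using assms by simp
qed

lemma sum_tri_pow_mult:
  "(\<Sum>t\<le>s. tri_pow \<beta> s t * tri_pow \<alpha> r t) = \<alpha> ^ (r - s) * \<beta> ^ (s - r) * (\<Sum>i\<le>min s r. (\<alpha> * \<beta>) ^ i)"
proof -
  define m where "m = min s r"
  have "(\<Sum>t\<le>s. tri_pow \<beta> s t * tri_pow \<alpha> r t) = (\<Sum>t=0..m. tri_pow \<beta> s t * tri_pow \<alpha> r t)"
    by (rule sum.mono_neutral_right) (auto simp: tri_pow_def m_def)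
  also have "\<dots> = (\<Sum>t=0..m. \<alpha> ^ (r - s) * \<beta> ^ (s - r) * (\<alpha> * \<beta>) ^ (m - t))"
  proof (rule sum.cong)
    fix t assume "t \<in> {0..m}"
    then have "r - t = (r - s) + (m - t)" "s - t = (s - r) + (m - t)"
      by (auto simp: m_def)
    then have "\<alpha> ^ (r - t) = \<alpha> ^ (r - s) * \<alpha> ^ (m - t)" "\<beta> ^ (s - t) = \<beta> ^ (s - r) * \<beta> ^ (m - t)"
      by (simp_all add: power_add)
    with \<open>t \<in> {0..m}\<close> show "tri_pow \<beta> s t * tri_pow \<alpha> r t = \<alpha> ^ (r - s) * \<beta> ^ (s - r) * (\<alpha> * \<beta>) ^ (m - t)"
      by (simp add: tri_pow_def m_def power_mult_distrib)
  qed simp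
  also have "\<dots> = \<alpha> ^ (r - s) * \<beta> ^ (s - r) * (\<Sum>i\<le>m. (\<alpha> * \<beta>) ^ i)"
    by (subst sum.atLeastAtMost_rev) (simp add: sum_distrib_left atMost_atLeast0)
  finally show ?thesis
    by (simp add: m_def)
qed

lemma geometric_gram_decomp:
  assumes "\<alpha> * \<beta> \<noteq> 1"
  shows "\<alpha> ^ (r - s) * \<beta> ^ (s - r) / (1 - \<alpha> * \<beta>)
       = (\<Sum>t\<le>s. tri_pow \<beta> s t * tri_pow \<alpha> r t) + \<alpha> * \<beta> / (1 - \<alpha> * \<beta>) * (\<beta> ^ s * \<alpha> ^ r)"
proof -
  define m where "m = min s r"
  define c where "c = \<alpha> ^ (r - s) * \<beta> ^ (s - r)"
  have "s = (s - r) + m" "r = (r - s) + m"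
    by (auto simp: m_def)
  then have "\<beta> ^ s * \<alpha> ^ r = \<beta> ^ ((s - r) + m) * \<alpha> ^ ((r - s) + m)"
    by (simp only: flip: \<open>s = (s - r) + m\<close> \<open>r = (r - s) + m\<close>)
  also have "\<dots> = c * (\<alpha> * \<beta>) ^ m"
    by (simp add: c_def power_add power_mult_distrib mult_ac)
  finally have "\<beta> ^ s * \<alpha> ^ r = c * (\<alpha> * \<beta>) ^ m" .
  moreover have "c * ((1 - \<alpha> * \<beta>) * (\<Sum>i\<le>m. (\<alpha> * \<beta>) ^ i)) = c * (1 - (\<alpha> * \<beta>) ^ Suc m)"
    by (simp only: sum_gp_basic)
  ultimately show ?thesis
    using assms unfolding sum_tri_pow_mult c_def[symmetric] m_def[symmetric]
    by (simp add: field_simps)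
qed

lemma tri_prod_eq: "tri_prod \<alpha> \<beta> d t = (\<Sum>s=t..d. \<alpha> ^ (d - s) * \<beta> ^ (s - t))"
proof -
  have "tri_prod \<alpha> \<beta> d t = (\<Sum>s=t..d. tri_pow \<alpha> d s * tri_pow \<beta> s t)"
    unfolding tri_prod_def by (rule sum.mono_neutral_right) (auto simp: tri_pow_def)
  then show ?thesis
    by (simp add: tri_pow_def)
qed

lemma tri_prod_commute: "tri_prod \<alpha> \<beta> d t = tri_prod \<beta> \<alpha> d t"
  unfolding tri_prod_eq by (subst sum.atLeastAtMost_rev) (auto intro: sum.cong)

lemma transfer_kernel_comp_commute: "transfer_kernel_comp \<alpha> \<beta> d f = transfer_kernel_comp \<beta> \<alpha> d f"
  by (simp add: transfer_kernel_comp_def tri_prod_commute[of \<alpha> \<beta>] mult.commute[of \<alpha> \<beta>])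

lemma transfer_kernel_comp_eq:
  assumes "\<alpha> * \<beta> \<noteq> 1"
  shows "transfer_kernel_comp \<alpha> \<beta> d f = (\<Sum>s\<le>d. \<Sum>r\<le>f.
           tri_pow \<alpha> d s * tri_pow \<beta> f r * (\<alpha> ^ (r - s) * \<beta> ^ (s - r) / (1 - \<alpha> * \<beta>)))"
proof -
  define c where "c = \<alpha> * \<beta> / (1 - \<alpha> * \<beta>)"
  have gram: "\<alpha> ^ (r - s) * \<beta> ^ (s - r) / (1 - \<alpha> * \<beta>)
      = (\<Sum>t\<le>d. tri_pow \<beta> s t * tri_pow \<alpha> r t) + c * (tri_pow \<beta> s 0 * tri_pow \<alpha> r 0)"
    if "s \<le> d" for s r
  proof -
    have "(\<Sum>t\<le>s. tri_pow \<beta> s t * tri_pow \<alpha> r t) = (\<Sum>t\<le>d. tri_pow \<beta> s t * tri_pow \<alpha> r t)"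
      by (rule sum.mono_neutral_left) (use that in \<open>auto simp: tri_pow_def\<close>)
    with geometric_gram_decomp[OF assms, of r s] show ?thesis
      by (simp add: c_def)
  qed
  have "(\<Sum>t\<le>d. tri_prod \<alpha> \<beta> d t * tri_prod \<beta> \<alpha> f t)
      = (\<Sum>t\<le>d. \<Sum>s\<le>d. \<Sum>r\<le>f. tri_pow \<alpha> d s * tri_pow \<beta> f r * (tri_pow \<beta> s t * tri_pow \<alpha> r t))"
    unfolding tri_prod_def sum_product by (simp add: mult_ac)
  also have "\<dots> = (\<Sum>s\<le>d. \<Sum>r\<le>f. \<Sum>t\<le>d. tri_pow \<alpha> d s * tri_pow \<beta> f r * (tri_pow \<beta> s t * tri_pow \<alpha> r t))"
    by (subst sum.swap) (intro sum.cong refl sum.swap)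
  moreover have "c * (tri_prod \<alpha> \<beta> d 0 * tri_prod \<beta> \<alpha> f 0)
      = (\<Sum>s\<le>d. \<Sum>r\<le>f. tri_pow \<alpha> d s * tri_pow \<beta> f r * (c * (tri_pow \<beta> s 0 * tri_pow \<alpha> r 0)))"
    unfolding tri_prod_def sum_product by (simp add: sum_distrib_left mult_ac)
  ultimately have "transfer_kernel_comp \<alpha> \<beta> d f
      = (\<Sum>s\<le>d. \<Sum>r\<le>f. \<Sum>t\<le>d. tri_pow \<alpha> d s * tri_pow \<beta> f r * (tri_pow \<beta> s t * tri_pow \<alpha> r t))
        + (\<Sum>s\<le>d. \<Sum>r\<le>f. tri_pow \<alpha> d s * tri_pow \<beta> f r * (c * (tri_pow \<beta> s 0 * tri_pow \<alpha> r 0)))"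
    by (simp add: transfer_kernel_comp_def c_def)
  also have "\<dots> = (\<Sum>s\<le>d. \<Sum>r\<le>f.
           tri_pow \<alpha> d s * tri_pow \<beta> f r * (\<alpha> ^ (r - s) * \<beta> ^ (s - r) / (1 - \<alpha> * \<beta>)))"
    unfolding sum.distrib[symmetric]
    by (intro sum.cong refl) (simp add: gram distrib_left sum_distrib_left)
  finally show ?thesis .
qed

lemma has_sum_transfer_kernel_mult:
  assumes "0 \<le> \<alpha>" and "0 \<le> \<beta>" and "\<alpha> * \<beta> < 1"
  shows "((\<lambda>e. transfer_kernel \<alpha> d e * transfer_kernel \<beta> e f) has_sum transfer_kernel_comp \<alpha> \<beta> d f) UNIV"
proof -
  have "transfer_kernel \<alpha> d e * transfer_kernel \<beta> e f
      = (\<Sum>s\<le>d. \<Sum>r\<le>f. tri_pow \<alpha> d s * tri_pow \<beta> f r * (tri_pow \<alpha> e s * tri_pow \<beta> e r))" for e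
  proof -
    have "transfer_kernel \<beta> e f = (\<Sum>r\<le>f. tri_pow \<beta> e r * tri_pow \<beta> f r)"
      by (rule transfer_kernel_eq_sum_atMost) simp
    then show ?thesis
      by (simp add: transfer_kernel_def[of \<alpha>] sum_product mult_ac)
  qed
  moreover have "((\<lambda>e. \<Sum>s\<le>d. \<Sum>r\<le>f. tri_pow \<alpha> d s * tri_pow \<beta> f r * (tri_pow \<alpha> e s * tri_pow \<beta> e r))
      has_sum transfer_kernel_comp \<alpha> \<beta> d f) UNIV"
    unfolding transfer_kernel_comp_eq[OF less_imp_neq[OF assms(3)]]
    by (intro has_sum_sum_finite finite_atMost has_sum_cmult_right has_sum_tri_pow_mult assms)
  ultimately show ?thesis
    by simp
qed

section \<open>Transfer operators\<close>

text \<open>\<open>\<alpha> < \<rho>\<close> keeps \<open>transfer_op \<alpha>\<close> inside the sequences of growth \<open>O(\<rho>\<^sup>d)\<close>, and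
  \<open>\<alpha> * \<rho> < 1\<close> makes its defining series converge there.\<close>

definition admissible_rate :: "real \<Rightarrow> real \<Rightarrow> bool" where
  "admissible_rate \<rho> \<alpha> \<longleftrightarrow> 0 \<le> \<alpha> \<and> \<alpha> < \<rho> \<and> \<alpha> * \<rho> < 1"

definition geom_dominated :: "real \<Rightarrow> (nat \<Rightarrow> real) \<Rightarrow> bool" where
  "geom_dominated \<rho> v \<longleftrightarrow> (\<forall>d. 0 \<le> v d) \<and> (\<exists>C. \<forall>d. v d \<le> C * \<rho> ^ d)"

definition transfer_op :: "real \<Rightarrow> (nat \<Rightarrow> real) \<Rightarrow> nat \<Rightarrow> real" where
  "transfer_op \<alpha> v d = (\<Sum>\<^sub>\<infinity>e. transfer_kernel \<alpha> d e * v e)"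

lemma admissible_rate_mult_less_one:
  assumes "admissible_rate \<rho> \<alpha>" and "admissible_rate \<rho> \<beta>"
  shows "\<alpha> * \<beta> < 1"
proof -
  have "\<alpha> * \<beta> \<le> \<rho> * \<beta>"
    using assms by (intro mult_right_mono) (auto simp: admissible_rate_def)
  also have "\<rho> * \<beta> < 1"
    using assms(2) by (simp add: admissible_rate_def mult.commute)
  finally show ?thesis .
qed

lemma has_sum_transfer_kernel_geometric:
  assumes "0 \<le> \<alpha>" and "0 \<le> \<rho>" and "\<alpha> * \<rho> < 1"
  shows "((\<lambda>e. transfer_kernel \<alpha> d e * \<rho> ^ e) has_sum tri_prod \<alpha> \<rho> d 0 / (1 - \<alpha> * \<rho>)) UNIV"
proof -
  have "transfer_kernel \<alpha> d e * \<rho> ^ e = (\<Sum>s\<le>d. tri_pow \<alpha> d s * (tri_pow \<alpha> e s * tri_pow \<rho> e 0))" for e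
    unfolding transfer_kernel_def sum_distrib_right by (simp add: mult_ac)
  moreover have "((\<lambda>e. \<Sum>s\<le>d. tri_pow \<alpha> d s * (tri_pow \<alpha> e s * tri_pow \<rho> e 0))
      has_sum (\<Sum>s\<le>d. tri_pow \<alpha> d s * (\<rho> ^ s / (1 - \<alpha> * \<rho>)))) UNIV"
    using has_sum_tri_pow_mult[OF assms, of _ 0]
    by (intro has_sum_sum_finite finite_atMost has_sum_cmult_right) simp
  ultimately show ?thesis
    by (simp add: tri_prod_def sum_divide_distrib)
qed

lemma tri_prod_le:
  assumes "0 \<le> \<alpha>" and "\<alpha> < \<rho>"
  shows "tri_prod \<alpha> \<rho> d 0 \<le> \<rho> ^ d / (1 - \<alpha> / \<rho>)"
proof -
  define q where "q = \<alpha> / \<rho>"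
  have q: "0 \<le> q" "q < 1"
    using assms by (auto simp: q_def)
  have "tri_prod \<alpha> \<rho> d 0 = \<rho> ^ d * (\<Sum>s=0..d. q ^ (d - s))"
    unfolding tri_prod_def atMost_atLeast0 sum_distrib_left
  proof (intro sum.cong refl)
    fix s assume "s \<in> {0..d}"
    then have "\<rho> ^ d = \<rho> ^ (d - s) * \<rho> ^ s"
      by (simp flip: power_add)
    with assms show "tri_pow \<alpha> d s * tri_pow \<rho> s 0 = \<rho> ^ d * q ^ (d - s)"
      using \<open>s \<in> {0..d}\<close> by (simp add: tri_pow_def q_def power_divide)
  qed
  also have "(\<Sum>s=0..d. q ^ (d - s)) = (\<Sum>i\<le>d. q ^ i)"
    by (subst sum.atLeastAtMost_rev) (simp add: atLeast0AtMost)
  also have "\<dots> \<le> 1 / (1 - q)"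
  proof -
    have "(1 - q) * (\<Sum>i\<le>d. q ^ i) \<le> 1"
      using q by (simp add: sum_gp_basic)
    with q show ?thesis
      by (simp add: field_simps)
  qed
  finally show ?thesis
    using assms by (simp add: q_def divide_simps mult_left_mono)
qed

lemma has_sum_transfer_op:
  assumes "admissible_rate \<rho> \<alpha>" and "geom_dominated \<rho> v"
  shows "((\<lambda>e. transfer_kernel \<alpha> d e * v e) has_sum transfer_op \<alpha> v d) UNIV"
proof -
  obtain C where C: "\<And>e. v e \<le> C * \<rho> ^ e" and v: "\<And>e. 0 \<le> v e"
    using assms(2) by (auto simp: geom_dominated_def)
  have "((\<lambda>e. C * (transfer_kernel \<alpha> d e * \<rho> ^ e)) has_sum C * (tri_prod \<alpha> \<rho> d 0 / (1 - \<alpha> * \<rho>))) UNIV"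
    using assms(1) by (intro has_sum_cmult_right has_sum_transfer_kernel_geometric) (auto simp: admissible_rate_def)
  then have "(\<lambda>e. transfer_kernel \<alpha> d e * v e) summable_on UNIV"
  proof (rule summable_on_comparison_test[OF has_sum_imp_summable])
    fix e
    have K: "0 \<le> transfer_kernel \<alpha> d e"
      using assms(1) by (simp add: admissible_rate_def transfer_kernel_nonneg)
    then show "0 \<le> transfer_kernel \<alpha> d e * v e"
      using v by simp
    have "transfer_kernel \<alpha> d e * v e \<le> transfer_kernel \<alpha> d e * (C * \<rho> ^ e)"
      using C K by (rule mult_left_mono)
    then show "transfer_kernel \<alpha> d e * v e \<le> C * (transfer_kernel \<alpha> d e * \<rho> ^ e)"
      by (simp add: mult_ac)
  qed
  then show ?thesis
    by (simp add: transfer_op_def)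
qed

lemma geom_dominated_transfer_op:
  assumes "admissible_rate \<rho> \<alpha>" and "geom_dominated \<rho> v"
  shows "geom_dominated \<rho> (transfer_op \<alpha> v)"
proof -
  obtain C where C: "\<And>e. v e \<le> C * \<rho> ^ e" and v: "\<And>e. 0 \<le> v e"
    using assms(2) by (auto simp: geom_dominated_def)
  have \<alpha>: "0 \<le> \<alpha>" "\<alpha> < \<rho>" "\<alpha> * \<rho> < 1"
    using assms(1) by (auto simp: admissible_rate_def)
  have K: "0 \<le> transfer_kernel \<alpha> d e" for d e
    using \<alpha> by (simp add: transfer_kernel_nonneg)
  have "transfer_op \<alpha> v d \<le> C / ((1 - \<alpha> * \<rho>) * (1 - \<alpha> / \<rho>)) * \<rho> ^ d" for d
  proof -
    have "((\<lambda>e. C * (transfer_kernel \<alpha> d e * \<rho> ^ e)) has_sum C * (tri_prod \<alpha> \<rho> d 0 / (1 - \<alpha> * \<rho>))) UNIV"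
      using \<alpha> by (intro has_sum_cmult_right has_sum_transfer_kernel_geometric) auto
    moreover have "transfer_kernel \<alpha> d e * v e \<le> C * (transfer_kernel \<alpha> d e * \<rho> ^ e)" for e
      using mult_left_mono[OF C K] by (simp add: mult_ac)
    ultimately have "transfer_op \<alpha> v d \<le> C * (tri_prod \<alpha> \<rho> d 0 / (1 - \<alpha> * \<rho>))"
      by (intro has_sum_mono[OF has_sum_transfer_op[OF assms]])
    also have "\<dots> \<le> C * (\<rho> ^ d / (1 - \<alpha> / \<rho>) / (1 - \<alpha> * \<rho>))"
      using C[of 0] v[of 0] \<alpha> by (intro mult_left_mono divide_right_mono tri_prod_le) auto
    finally show ?thesis
      by (simp add: field_simps)
  qed
  moreover have "0 \<le> transfer_op \<alpha> v d" for d
    using has_sum_transfer_op[OF assms] by (rule has_sum_nonneg) (simp add: K v)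
  ultimately show ?thesis
    unfolding geom_dominated_def by blast
qed

lemma has_sum_transfer_op_transfer_op:
  assumes "admissible_rate \<rho> \<alpha>" and "admissible_rate \<rho> \<beta>" and "geom_dominated \<rho> v"
  shows "((\<lambda>f. transfer_kernel_comp \<alpha> \<beta> d f * v f) has_sum transfer_op \<alpha> (transfer_op \<beta> v) d) UNIV"
proof (rule has_sum_swap_nonneg)
  define F where "F = (\<lambda>(e, f). transfer_kernel \<alpha> d e * (transfer_kernel \<beta> e f * v f))"
  show "0 \<le> F (e, f)" for e f
    using assms by (auto simp: F_def admissible_rate_def geom_dominated_def transfer_kernel_nonneg)
  show "((\<lambda>f. F (e, f)) has_sum transfer_kernel \<alpha> d e * transfer_op \<beta> v e) UNIV" for e
    unfolding F_def using has_sum_transfer_op[OF assms(2,3)] by (simp add: has_sum_cmult_right)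
  show "((\<lambda>e. transfer_kernel \<alpha> d e * transfer_op \<beta> v e) has_sum transfer_op \<alpha> (transfer_op \<beta> v) d) UNIV"
    by (rule has_sum_transfer_op[OF assms(1) geom_dominated_transfer_op[OF assms(2,3)]])
  show "((\<lambda>e. F (e, f)) has_sum transfer_kernel_comp \<alpha> \<beta> d f * v f) UNIV" for f
    using has_sum_cmult_left[OF has_sum_transfer_kernel_mult[of \<alpha> \<beta> d f], of "v f"] assms
      admissible_rate_mult_less_one[OF assms(1,2)]
    by (simp add: F_def admissible_rate_def mult.assoc)
qed

lemma transfer_op_commute:
  assumes "admissible_rate \<rho> \<alpha>" and "admissible_rate \<rho> \<beta>" and "geom_dominated \<rho> v"
  shows "transfer_op \<alpha> (transfer_op \<beta> v) = transfer_op \<beta> (transfer_op \<alpha> v)"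
proof
  fix d
  show "transfer_op \<alpha> (transfer_op \<beta> v) d = transfer_op \<beta> (transfer_op \<alpha> v) d"
    using has_sum_transfer_op_transfer_op[OF assms, of d] has_sum_transfer_op_transfer_op[OF assms(2,1,3), of d]
    by (simp add: transfer_kernel_comp_commute[of \<beta> \<alpha>] has_sum_unique)
qed

definition transfer_iter :: "real \<Rightarrow> real list \<Rightarrow> nat \<Rightarrow> real" where
  "transfer_iter y ls = foldr transfer_op ls (\<lambda>d. y ^ d)"

lemma transfer_iter_simps [simp]:
  "transfer_iter y [] = (\<lambda>d. y ^ d)"
  "transfer_iter y (\<alpha> # ls) = transfer_op \<alpha> (transfer_iter y ls)"
  by (simp_all add: transfer_iter_def)

lemma geom_dominated_transfer_iter:
  assumes "0 \<le> y" and "y \<le> \<rho>" and "\<forall>\<alpha>\<in>set ls. admissible_rate \<rho> \<alpha>"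
  shows "geom_dominated \<rho> (transfer_iter y ls)"
  using assms(3)
proof (induction ls)
  case Nil
  have "y ^ d \<le> 1 * \<rho> ^ d" for d
    using assms(1,2) by (simp add: power_mono)
  with assms(1) show ?case
    unfolding geom_dominated_def by (auto intro!: exI[of _ 1])
next
  case (Cons \<alpha> ls)
  then show ?case
    by (simp add: geom_dominated_transfer_op)
qed

lemma transfer_iter_move_to_front:
  assumes "0 \<le> y" and "y \<le> \<rho>" and "\<forall>\<alpha>\<in>set (xs @ x # zs). admissible_rate \<rho> \<alpha>"
  shows "transfer_iter y (xs @ x # zs) = transfer_iter y (x # xs @ zs)"
  using assms(3)
proof (induction xs)
  case (Cons z xs)
  then have "transfer_iter y (z # xs @ x # zs) = transfer_op z (transfer_op x (transfer_iter y (xs @ zs)))"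
    by simp
  also have "\<dots> = transfer_op x (transfer_op z (transfer_iter y (xs @ zs)))"
    using Cons.prems assms(1,2) by (intro transfer_op_commute geom_dominated_transfer_iter) auto
  finally show ?case
    by simp
qed simp

lemma transfer_iter_perm:
  assumes "mset ls = mset ls'" and "0 \<le> y" and "y \<le> \<rho>" and "\<forall>\<alpha>\<in>set ls. admissible_rate \<rho> \<alpha>"
  shows "transfer_iter y ls = transfer_iter y ls'"
  using assms(1,4)
proof (induction ls arbitrary: ls')
  case (Cons x xs)
  have set_eq: "set ls' = set (x # xs)"
    using Cons.prems(1) by (metis set_mset_mset)
  then obtain ys zs where ls': "ls' = ys @ x # zs"
    by (metis list.set_intros(1) split_list)
  have "transfer_iter y ls' = transfer_iter y (x # ys @ zs)"
    unfolding ls' using Cons.prems(2) set_eq ls' assms(2,3) by (intro transfer_iter_move_to_front) auto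
  also have "\<dots> = transfer_iter y (x # xs)"
    using Cons.prems ls' Cons.IH[of "ys @ zs"] by simp
  finally show ?case
    by (rule sym)
qed simp

section \<open>Summing out one layer\<close>

definition layer_gap :: "int \<times> int \<Rightarrow> int" where
  "layer_gap x = fst x - snd x"

definition reflect_layer :: "int \<times> int \<Rightarrow> int \<times> int" where
  "reflect_layer x = (- snd x, - fst x)"

text \<open>One factor of \<^const>\<open>wt_GP\<close>, for the layers \<open>u = (\<lambda>\<^sub>1, \<lambda>\<^sub>2)\<close> at \<open>up(j)\<close> and
  \<open>w\<close> at \<open>low(j)\<close>.\<close>

definition edge_weight :: "real \<Rightarrow> int \<times> int \<Rightarrow> int \<times> int \<Rightarrow> real" where
  "edge_weight \<alpha> u w =
     (\<alpha> powi (fst u - fst w) * ind (fst u \<ge> fst w)) * (\<alpha> powi (snd u - snd w) * ind (snd u \<ge> snd w))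
     * ind (fst w \<ge> snd u)"

lemma ind_simps [simp]: "ind True = 1" "ind False = 0"
  by (simp_all add: ind_def)

lemma edge_weight_nonneg: "0 \<le> \<alpha> \<Longrightarrow> 0 \<le> edge_weight \<alpha> u w"
  by (simp add: edge_weight_def ind_def)

lemma edge_weight_eq_0:
  assumes "\<not> (fst w \<le> fst u \<and> snd w \<le> snd u \<and> snd u \<le> fst w)"
  shows "edge_weight \<alpha> u w = 0"
  using assms by (auto simp: edge_weight_def ind_def)

lemma edge_weight_reflect: "edge_weight \<alpha> (reflect_layer w) (reflect_layer u) = edge_weight \<alpha> u w"
  by (simp add: edge_weight_def reflect_layer_def mult_ac)

lemma layer_gap_reflect [simp]: "layer_gap (reflect_layer x) = layer_gap x"
  by (simp add: layer_gap_def reflect_layer_def)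

lemma reflect_layer_reflect_layer [simp]: "reflect_layer (reflect_layer x) = x"
  by (simp add: reflect_layer_def)

lemma has_sum_transfer_kernel_expand:
  assumes "0 \<le> \<alpha>" and "\<And>e. 0 \<le> v e" and "((\<lambda>e. transfer_kernel \<alpha> d e * v e) has_sum S) UNIV"
  shows "((\<lambda>(e, s). tri_pow \<alpha> d s * tri_pow \<alpha> e s * v e) has_sum S) {(e, s). s \<le> d \<and> s \<le> e}"
proof -
  define F where "F = (\<lambda>(e, s). tri_pow \<alpha> d s * tri_pow \<alpha> e s * v e)"
  have "(F has_sum S) (UNIV \<times> UNIV)"
  proof (rule has_sum_Sigma_nonneg)
    show "0 \<le> F (e, s)" for e s
      using assms by (simp add: F_def tri_pow_nonneg)
    show "((\<lambda>s. F (e, s)) has_sum transfer_kernel \<alpha> d e * v e) UNIV" for e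
      by (rule has_sum_finite_neutralI[where B = "{..d}"])
         (auto simp: F_def tri_pow_def transfer_kernel_def sum_distrib_right)
  qed (use assms(3) in simp)
  also have "?this \<longleftrightarrow> (F has_sum S) {(e, s). s \<le> d \<and> s \<le> e}"
    by (rule has_sum_cong_neutral) (auto simp: F_def tri_pow_def split: if_splits)
  finally show ?thesis
    by (simp add: F_def)
qed

text \<open>The pairs \<open>(e, s)\<close> with \<open>s \<le> min d e\<close> parametrise the upper layers \<open>z\<close> of positive
  weight over a lower layer \<open>x\<close> of gap \<open>d\<close>, by \<open>layer_gap z = e\<close> and \<open>snd z = fst x - s\<close>.\<close>

lemma has_sum_edge_weight_upper:
  assumes "0 \<le> \<alpha>" and "0 \<le> layer_gap x" and "\<And>e. 0 \<le> v e"
    and "((\<lambda>e. transfer_kernel \<alpha> (nat (layer_gap x)) e * v e) has_sum S) UNIV"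
  shows "((\<lambda>z. edge_weight \<alpha> z x * v (nat (layer_gap z))) has_sum S) UNIV"
proof -
  define d where "d = nat (layer_gap x)"
  define Z where "Z = {z. fst x \<le> fst z \<and> snd x \<le> snd z \<and> snd z \<le> fst x}"
  have gap: "int d = fst x - snd x"
    using assms(2) by (simp add: d_def layer_gap_def)
  have "((\<lambda>(e, s). tri_pow \<alpha> d s * tri_pow \<alpha> e s * v e) has_sum S) {(e, s). s \<le> d \<and> s \<le> e}"
    using assms by (intro has_sum_transfer_kernel_expand) (simp_all add: d_def)
  also have "?this \<longleftrightarrow> ((\<lambda>z. edge_weight \<alpha> z x * v (nat (layer_gap z))) has_sum S) Z"
  proof (rule has_sum_reindex_bij_witness[where j = "\<lambda>(e, s). (fst x - int s + int e, fst x - int s)"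
        and i = "\<lambda>z. (nat (layer_gap z), nat (fst x - snd z))"])
    fix es assume "es \<in> {(e, s). s \<le> d \<and> s \<le> e}"
    then obtain e s where es: "es = (e, s)" "s \<le> d" "s \<le> e"
      by auto
    with gap show "(case es of (e, s) \<Rightarrow> (fst x - int s + int e, fst x - int s)) \<in> Z"
      by (auto simp: Z_def)
    have "int e - int s = int (e - s)" "fst x - int s - snd x = int (d - s)"
      using es gap by auto
    then have "\<alpha> powi (int e - int s) = \<alpha> ^ (e - s)" "\<alpha> powi (fst x - int s - snd x) = \<alpha> ^ (d - s)"
      by (simp_all only: power_int_of_nat)
    then show "edge_weight \<alpha> (case es of (e, s) \<Rightarrow> (fst x - int s + int e, fst x - int s)) x
        * v (nat (layer_gap (case es of (e, s) \<Rightarrow> (fst x - int s + int e, fst x - int s))))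
        = (case es of (e, s) \<Rightarrow> tri_pow \<alpha> d s * tri_pow \<alpha> e s * v e)"
      using es gap by (simp add: edge_weight_def layer_gap_def tri_pow_def mult_ac)
  qed (auto simp: Z_def d_def layer_gap_def)
  also have "\<dots> \<longleftrightarrow> ?thesis"
    by (rule has_sum_cong_neutral) (auto simp: Z_def intro!: edge_weight_eq_0)
  finally show ?thesis .
qed

lemma has_sum_edge_weight_lower:
  assumes "0 \<le> \<alpha>" and "0 \<le> layer_gap x" and "\<And>e. 0 \<le> v e"
    and "((\<lambda>e. transfer_kernel \<alpha> (nat (layer_gap x)) e * v e) has_sum S) UNIV"
  shows "((\<lambda>z. edge_weight \<alpha> x z * v (nat (layer_gap z))) has_sum S) UNIV"
proof -
  have "((\<lambda>z. edge_weight \<alpha> z (reflect_layer x) * v (nat (layer_gap z))) has_sum S) UNIV"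
    using assms by (intro has_sum_edge_weight_upper) simp_all
  also have "?this \<longleftrightarrow> ?thesis"
    by (rule has_sum_reindex_bij_witness[where i = reflect_layer and j = reflect_layer])
       (simp_all add: edge_weight_reflect[of \<alpha> "reflect_layer z" x for z, simplified])
  finally show ?thesis .
qed

text \<open>A step is a pair (horizontal?, label); the next layer \<open>z\<close> is the upper one exactly when the
  step is horizontal.\<close>

definition step_weight :: "bool \<times> real \<Rightarrow> int \<times> int \<Rightarrow> int \<times> int \<Rightarrow> real" where
  "step_weight st x z = (if fst st then edge_weight (snd st) z x else edge_weight (snd st) x z)"

lemma step_weight_nonneg: "0 \<le> snd st \<Longrightarrow> 0 \<le> step_weight st x z"
  by (simp add: step_weight_def edge_weight_nonneg)

lemma step_weight_eq_0:
  assumes "layer_gap x < 0 \<or> layer_gap z < 0"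
  shows "step_weight st x z = 0"
  using assms by (auto simp: step_weight_def layer_gap_def intro!: edge_weight_eq_0)

lemma has_sum_step_weight:
  assumes "0 \<le> snd st" and "0 \<le> layer_gap x" and "\<And>e. 0 \<le> v e"
    and "((\<lambda>e. transfer_kernel (snd st) (nat (layer_gap x)) e * v e) has_sum S) UNIV"
  shows "((\<lambda>z. step_weight st x z * v (nat (layer_gap z))) has_sum S) UNIV"
  using assms has_sum_edge_weight_upper[of "snd st" x v S] has_sum_edge_weight_lower[of "snd st" x v S]
  by (cases "fst st") (simp_all add: step_weight_def)

fun chain_weight :: "real \<Rightarrow> (bool \<times> real) list \<Rightarrow> int \<times> int \<Rightarrow> (int \<times> int) list \<Rightarrow> real" where
  "chain_weight y [] x zs = y powi layer_gap x"
| "chain_weight y (st # sts) x [] = 0"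
| "chain_weight y (st # sts) x (z # zs) = step_weight st x z * chain_weight y sts z zs"

lemma chain_weight_nonneg:
  assumes "0 \<le> y" and "\<forall>st\<in>set sts. 0 \<le> snd st"
  shows "0 \<le> chain_weight y sts x zs"
  using assms by (induction y sts x zs rule: chain_weight.induct) (simp_all add: step_weight_nonneg)

lemma has_sum_chain_weight:
  assumes "0 \<le> y" and "y \<le> \<rho>" and "\<forall>\<alpha>\<in>set (map snd sts). admissible_rate \<rho> \<alpha>"
    and "0 \<le> layer_gap x"
  shows "(chain_weight y sts x has_sum transfer_iter y (map snd sts) (nat (layer_gap x)))
           {zs. length zs = length sts}"
  using assms(3,4)
proof (induction sts arbitrary: x)
  case Nil
  have "{zs :: (int \<times> int) list. length zs = 0} = {[]}"
    by auto
  moreover have "y powi layer_gap x = y ^ nat (layer_gap x)"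
    using Nil.prems(2) by (simp add: power_int_nonneg_exp)
  ultimately show ?case
    by (simp add: has_sum_finiteI)
next
  case (Cons st sts)
  define V where "V = transfer_iter y (map snd sts)"
  define T where "T = {zs :: (int \<times> int) list. length zs = length sts}"
  have st: "admissible_rate \<rho> (snd st)" and sts: "\<forall>\<alpha>\<in>set (map snd sts). admissible_rate \<rho> \<alpha>"
    using Cons.prems by auto
  then have V: "geom_dominated \<rho> V"
    unfolding V_def using assms(1,2) by (intro geom_dominated_transfer_iter) auto
  define G where "G = (\<lambda>(z, zs). step_weight st x z * chain_weight y sts z zs)"
  have "(G has_sum transfer_op (snd st) V (nat (layer_gap x))) (UNIV \<times> T)"
  proof (rule has_sum_Sigma_nonneg)
    show "0 \<le> G (z, zs)" for z zs
      using st sts assms(1) by (auto simp: G_def admissible_rate_def intro!: mult_nonneg_nonneg step_weight_nonneg chain_weight_nonneg)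
    show "((\<lambda>zs. G (z, zs)) has_sum step_weight st x z * V (nat (layer_gap z))) T" for z
    proof (cases "0 \<le> layer_gap z")
      case True
      then show ?thesis
        unfolding G_def T_def V_def using sts by (simp add: has_sum_cmult_right Cons.IH)
    qed (simp add: G_def step_weight_eq_0)
    show "((\<lambda>z. step_weight st x z * V (nat (layer_gap z))) has_sum transfer_op (snd st) V (nat (layer_gap x))) UNIV"
      using st V Cons.prems(2) by (intro has_sum_step_weight has_sum_transfer_op)
        (auto simp: admissible_rate_def geom_dominated_def)
  qed
  also have "?this \<longleftrightarrow> ?case"
    by (rule has_sum_reindex_bij_witness[where j = "\<lambda>(z, zs). z # zs" and i = "\<lambda>zs. (hd zs, tl zs)"])
       (auto simp: G_def T_def V_def length_Suc_conv)
  finally show ?case .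
qed

section \<open>The weight as a chain of transfer steps\<close>

definition path_steps :: "nat \<Rightarrow> (int \<Rightarrow> real) \<Rightarrow> (nat \<Rightarrow> int \<times> int) \<Rightarrow> (bool \<times> real) list" where
  "path_steps N a p = map (\<lambda>j. (is_horiz p j, edge_label a p j)) [1..<N+1]"

lemma length_path_steps [simp]: "length (path_steps N a p) = N"
  by (simp add: path_steps_def)

lemma chain_weight_upt:
  "chain_weight y (map st [Suc m..<Suc (m + n)]) (lv m) (map lv [Suc m..<Suc (m + n)])
     = (\<Prod>j\<in>{Suc m..m + n}. step_weight (st j) (lv (j - 1)) (lv j)) * y powi layer_gap (lv (m + n))"
proof (induction n arbitrary: m)
  case (Suc n)
  have "[Suc m..<Suc (m + Suc n)] = Suc m # [Suc (Suc m)..<Suc (Suc m + n)]"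
    by (simp add: upt_conv_Cons)
  moreover have "(\<Prod>j\<in>{Suc m..m + Suc n}. step_weight (st j) (lv (j - 1)) (lv j))
      = step_weight (st (Suc m)) (lv m) (lv (Suc m)) * (\<Prod>j\<in>{Suc (Suc m)..Suc m + n}. step_weight (st j) (lv (j - 1)) (lv j))"
    by (subst prod.atLeast_Suc_atMost) auto
  ultimately show ?case
    using Suc.IH[of "Suc m"] by simp
qed simp

lemma wt_GP_eq_chain_weight:
  "wt_GP N a c1 c2 p lam = c1 powi layer_gap (lam 1 0, lam 2 0)
     * chain_weight c2 (path_steps N a p) (lam 1 0, lam 2 0) (map (\<lambda>j. (lam 1 j, lam 2 j)) [1..<N+1])"
proof -
  define lv where "lv = (\<lambda>j. (lam 1 j, lam 2 j))"
  have "(\<Prod>i\<in>{1, 2}. edge_label a p j powi (lam i (up_idx p j) - lam i (low_idx p j))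
           * ind (lam i (up_idx p j) \<ge> lam i (low_idx p j)))
        * ind (lam 1 (low_idx p j) \<ge> lam 2 (up_idx p j))
      = step_weight (is_horiz p j, edge_label a p j) (lv (j - 1)) (lv j)" for j
    by (simp add: step_weight_def edge_weight_def up_idx_def low_idx_def lv_def)
  moreover have "chain_weight c2 (path_steps N a p) (lv 0) (map lv [1..<N+1])
      = (\<Prod>j\<in>{1..N}. step_weight (is_horiz p j, edge_label a p j) (lv (j - 1)) (lv j))
        * c2 powi layer_gap (lv N)"
    using chain_weight_upt[where y = c2 and st = "\<lambda>j. (is_horiz p j, edge_label a p j)" and m = 0 and lv = lv and n = N]
    by (simp add: path_steps_def)
  ultimately show ?thesis
    by (simp add: wt_GP_def lv_def layer_gap_def mult_ac)
qed

definition config_of_layers :: "nat \<Rightarrow> int \<Rightarrow> int \<times> (int \<times> int) list \<Rightarrow> nat \<Rightarrow> nat \<Rightarrow> int" where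
  "config_of_layers N x = (\<lambda>(y, zs) i j.
     if i = 1 then (if j = 0 then x else if j \<le> N then fst (zs ! (j - 1)) else 0)
     else if i = 2 then (if j = 0 then y else if j \<le> N then snd (zs ! (j - 1)) else 0)
     else 0)"

lemma layers_of_config_of_layers:
  assumes "length zs = N"
  shows "map (\<lambda>j. (config_of_layers N x (y, zs) 1 j, config_of_layers N x (y, zs) 2 j)) [1..<N+1] = zs"
  using assms by (intro nth_equalityI) (auto simp: config_of_layers_def nth_upt simp del: upt_Suc)

lemma bij_betw_config_of_layers:
  "bij_betw (config_of_layers N x) (UNIV \<times> {zs. length zs = N}) (configs N x)"
proof (rule bij_betwI[where g = "\<lambda>lam. (lam 2 0, map (\<lambda>j. (lam 1 j, lam 2 j)) [1..<N+1])"])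
  show "config_of_layers N x \<in> UNIV \<times> {zs. length zs = N} \<rightarrow> configs N x"
    by (auto simp: config_of_layers_def configs_def)
  show "(\<lambda>lam. (lam 2 0, map (\<lambda>j. (lam 1 j, lam 2 j)) [1..<N+1])) \<in> configs N x \<rightarrow> UNIV \<times> {zs. length zs = N}"
    by auto
  show "(config_of_layers N x yzs 2 0, map (\<lambda>j. (config_of_layers N x yzs 1 j, config_of_layers N x yzs 2 j)) [1..<N+1])
      = yzs" if "yzs \<in> UNIV \<times> {zs. length zs = N}" for yzs
  proof -
    obtain y zs where yzs: "yzs = (y, zs)"
      by fastforce
    with that have "length zs = N"
      by simp
    with yzs show ?thesis
      using layers_of_config_of_layers[of zs N x y] by (simp add: config_of_layers_def del: upt_Suc)
  qed
  show "config_of_layers N x (lam 2 0, map (\<lambda>j. (lam 1 j, lam 2 j)) [1..<N+1]) = lam" if "lam \<in> configs N x" for lam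
    using that by (intro ext) (auto simp: config_of_layers_def configs_def nth_upt simp del: upt_Suc)
qed

lemma has_sum_geometric_weighted:
  assumes "geom_dominated \<rho> V" and "0 \<le> \<rho>" and "0 \<le> c" and "c * \<rho> < 1"
  shows "((\<lambda>y. if y \<le> x then c powi (x - y) * V (nat (x - y)) else 0) has_sum (\<Sum>\<^sub>\<infinity>d. c ^ d * V d)) UNIV"
proof -
  obtain C where C: "\<And>d. V d \<le> C * \<rho> ^ d" and V: "\<And>d. 0 \<le> V d"
    using assms(1) by (auto simp: geom_dominated_def)
  have "((\<lambda>d. C * (c * \<rho>) ^ d) has_sum C * (1 / (1 - c * \<rho>))) UNIV"
    using assms(2-4) geometric_sums[of "c * \<rho>"]
    by (intro has_sum_cmult_right sums_nonneg_imp_has_sum) auto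
  then have "(\<lambda>d. c ^ d * V d) summable_on UNIV"
  proof (rule summable_on_comparison_test[OF has_sum_imp_summable])
    show "c ^ d * V d \<le> C * (c * \<rho>) ^ d" for d
      using mult_left_mono[OF C[of d], of "c ^ d"] assms(3) by (simp add: power_mult_distrib mult_ac)
    show "0 \<le> c ^ d * V d" for d
      using assms(3) V by simp
  qed
  then have "((\<lambda>d. c ^ d * V d) has_sum (\<Sum>\<^sub>\<infinity>d. c ^ d * V d)) UNIV"
    by simp
  also have "?this \<longleftrightarrow> ((\<lambda>y. c powi (x - y) * V (nat (x - y))) has_sum (\<Sum>\<^sub>\<infinity>d. c ^ d * V d)) {..x}"
    by (rule has_sum_reindex_bij_witness[where j = "\<lambda>d. x - int d" and i = "\<lambda>y. nat (x - y)"])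
       (auto simp: power_int_nonneg_exp)
  also have "\<dots> \<longleftrightarrow> ?thesis"
    by (rule has_sum_cong_neutral) auto
  finally show ?thesis .
qed

lemma wt_GP_config_of_layers:
  assumes "length zs = N"
  shows "wt_GP N a c1 c2 p (config_of_layers N x (y, zs)) = c1 powi (x - y) * chain_weight c2 (path_steps N a p) (x, y) zs"
  using wt_GP_eq_chain_weight[of N a c1 c2 p "config_of_layers N x (y, zs)"] layers_of_config_of_layers[OF assms]
  by (simp add: layer_gap_def) (simp add: config_of_layers_def)

lemma has_sum_wt_GP_config_of_layers:
  assumes "N \<ge> 1" and "0 \<le> c2" and "c2 \<le> \<rho>" and "\<forall>\<alpha>\<in>set (map snd (path_steps N a p)). admissible_rate \<rho> \<alpha>"
  shows "((\<lambda>zs. wt_GP N a c1 c2 p (config_of_layers N x (y, zs))) has_sum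
           (if y \<le> x then c1 powi (x - y) * transfer_iter c2 (map snd (path_steps N a p)) (nat (x - y)) else 0))
         {zs. length zs = N}"
proof (cases "y \<le> x")
  case True
  then have "(chain_weight c2 (path_steps N a p) (x, y) has_sum
      transfer_iter c2 (map snd (path_steps N a p)) (nat (x - y))) {zs. length zs = N}"
    using has_sum_chain_weight[OF assms(2-4), of "(x, y)"] by (simp add: layer_gap_def)
  with True show ?thesis
    by (subst has_sum_cong[OF wt_GP_config_of_layers]) (simp_all add: has_sum_cmult_right)
next
  case False
  txt \<open>The first step vanishes on a layer of negative gap; without it (\<open>N = 0\<close>) the sum over
    \<open>y\<close> would diverge.\<close>
  obtain st sts where "path_steps N a p = st # sts"
    using assms(1) length_path_steps[of N a p] by (cases "path_steps N a p") auto
  then have "chain_weight c2 (path_steps N a p) (x, y) zs = 0" for zs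
    using False by (cases zs) (auto simp: step_weight_eq_0 layer_gap_def)
  with False show ?thesis
    by (subst has_sum_cong[OF wt_GP_config_of_layers]) auto
qed

lemma has_sum_wt_GP:
  assumes "N \<ge> 1" and "0 \<le> c1" and "c1 * \<rho> < 1" and "0 \<le> c2" and "c2 \<le> \<rho>"
    and "\<forall>\<alpha>\<in>set (map snd (path_steps N a p)). admissible_rate \<rho> \<alpha>"
  shows "(wt_GP N a c1 c2 p has_sum (\<Sum>\<^sub>\<infinity>d. c1 ^ d * transfer_iter c2 (map snd (path_steps N a p)) d))
           (configs N x)"
proof -
  define V where "V = transfer_iter c2 (map snd (path_steps N a p))"
  have "((\<lambda>yzs. wt_GP N a c1 c2 p (config_of_layers N x yzs)) has_sum (\<Sum>\<^sub>\<infinity>d. c1 ^ d * V d))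
      (UNIV \<times> {zs. length zs = N})"
  proof (rule has_sum_Sigma_nonneg)
    show "0 \<le> wt_GP N a c1 c2 p (config_of_layers N x (y, zs))" if "zs \<in> {zs. length zs = N}" for y zs
      using that assms(2,4,6) unfolding wt_GP_config_of_layers[OF that[simplified]]
      by (auto simp: admissible_rate_def intro!: mult_nonneg_nonneg chain_weight_nonneg)
    show "((\<lambda>zs. wt_GP N a c1 c2 p (config_of_layers N x (y, zs))) has_sum
        (if y \<le> x then c1 powi (x - y) * V (nat (x - y)) else 0)) {zs. length zs = N}" for y
      unfolding V_def using assms(1,4-6) by (rule has_sum_wt_GP_config_of_layers)
    show "((\<lambda>y. if y \<le> x then c1 powi (x - y) * V (nat (x - y)) else 0) has_sum (\<Sum>\<^sub>\<infinity>d. c1 ^ d * V d)) UNIV"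
      unfolding V_def using assms(2-6)
      by (intro has_sum_geometric_weighted geom_dominated_transfer_iter) (auto simp: admissible_rate_def)
  qed
  then show ?thesis
    using has_sum_reindex_bij_betw[OF bij_betw_config_of_layers[of N x], of "wt_GP N a c1 c2 p"]
    by (simp add: V_def)
qed

section \<open>Labels along a down-right path\<close>

lemma down_right_path_step:
  assumes "down_right_path N p" and "Suc j \<le> N"
  obtains "is_horiz p (Suc j)" and "p (Suc j) = (fst (p j) + 1, snd (p j))"
    | "\<not> is_horiz p (Suc j)" and "p (Suc j) = (fst (p j), snd (p j) - 1)"
proof -
  have "is_horiz p (Suc j) \<or> is_vert p (Suc j)"
    using assms by (simp add: down_right_path_def)
  then show ?thesis
  proof
    assume "is_horiz p (Suc j)"
    with that(1) show ?thesis
      by (simp add: is_horiz_def prod_eq_iff)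
  next
    assume vert: "is_vert p (Suc j)"
    then have "\<not> is_horiz p (Suc j)"
      by (simp add: is_horiz_def is_vert_def)
    with vert that(2) show ?thesis
      by (simp add: is_vert_def prod_eq_iff)
  qed
qed

lemma mset_edge_labels_prefix:
  assumes "down_right_path N p" and "j \<le> N"
  shows "mset (map (edge_label a p) [1..<Suc j]) = image_mset a (mset_set {snd (p j) + 1..fst (p j)})"
  using assms(2)
proof (induction j)
  case 0
  then show ?case
    using assms(1) by (auto simp: down_right_path_def)
next
  case (Suc j)
  have ordered: "snd (p j) \<le> fst (p j)"
    using assms(1) Suc.prems by (simp add: down_right_path_def in_strip_def)
  have "mset (map (edge_label a p) [1..<Suc (Suc j)])
      = add_mset (edge_label a p (Suc j)) (image_mset a (mset_set {snd (p j) + 1..fst (p j)}))"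
    using Suc by simp
  also have "\<dots> = image_mset a (mset_set {snd (p (Suc j)) + 1..fst (p (Suc j))})"
  proof (cases rule: down_right_path_step[OF assms(1) Suc.prems])
    case 1
    then have "{snd (p (Suc j)) + 1..fst (p (Suc j))} = insert (fst (p j) + 1) {snd (p j) + 1..fst (p j)}"
      using ordered by auto
    with 1 show ?thesis
      by (simp add: edge_label_def)
  next
    case 2
    then have "{snd (p (Suc j)) + 1..fst (p (Suc j))} = insert (snd (p j)) {snd (p j) + 1..fst (p j)}"
      using ordered by auto
    with 2 show ?thesis
      by (simp add: edge_label_def)
  qed
  finally show ?case .
qed

lemma mset_edge_labels:
  assumes "down_right_path N p"
  shows "mset (map (edge_label a p) [1..<Suc N]) = image_mset a (mset_set {snd (p N) + 1..snd (p N) + int N})"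
proof -
  have labels: "mset (map (edge_label a p) [1..<Suc N]) = image_mset a (mset_set {snd (p N) + 1..fst (p N)})"
    using assms by (rule mset_edge_labels_prefix) simp
  have "N = nat (fst (p N) - snd (p N))"
    using arg_cong[OF labels, of size] by (simp del: upt_Suc)
  moreover have "snd (p N) \<le> fst (p N)"
    using assms by (simp add: down_right_path_def in_strip_def)
  ultimately have "fst (p N) = snd (p N) + int N"
    by simp
  with labels show ?thesis
    by simp
qed

lemma image_mset_periodic_interval:
  assumes "N \<ge> 1" and "\<forall>j. a (j + int N) = a j"
  shows "image_mset a (mset_set {k + 1..k + int N}) = image_mset a (mset_set {1..int N})"
proof -
  have shift: "image_mset a (mset_set {k + 2..k + 1 + int N}) = image_mset a (mset_set {k + 1..k + int N})" for k
  proof -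
    have "{k + 2..k + 1 + int N} = insert (k + 1 + int N) {k + 2..k + int N}"
      "{k + 1..k + int N} = insert (k + 1) {k + 2..k + int N}"
      using assms(1) by auto
    moreover have "a (k + 1 + int N) = a (k + 1)"
      using assms(2) by simp
    ultimately show ?thesis
      by simp
  qed
  show ?thesis
  proof (induction k rule: int_induct[where k = 0])
    case (step1 i)
    then show ?case
      using shift[of i] by (simp add: add.assoc)
  next
    case (step2 i)
    then show ?case
      using shift[of "i - 1"] by (simp add: algebra_simps)
  qed simp
qed

lemma mset_path_labels:
  assumes "N \<ge> 1" and "\<forall>j. a (j + int N) = a j" and "down_right_path N p"
  shows "mset (map snd (path_steps N a p)) = mset (map a [1..int N])"
  using mset_edge_labels[OF assms(3), of a] image_mset_periodic_interval[OF assms(1,2)]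
  by (simp add: path_steps_def o_def mset_set_set[symmetric] del: upt_Suc)

lemma exists_separating_rate:
  fixes X Y :: "real set"
  assumes "finite X" and "X \<noteq> {}" and "finite Y" and "Y \<noteq> {}" and "\<forall>y\<in>Y. 0 < y"
    and "\<forall>x\<in>X. \<forall>y\<in>Y. x * y < 1"
  obtains \<rho> where "\<forall>x\<in>X. x < \<rho>" and "\<forall>y\<in>Y. y * \<rho> < 1"
proof -
  define lo where "lo = Max X"
  define hi where "hi = Min (inverse ` Y)"
  have "lo \<in> X" "hi \<in> inverse ` Y"
    using assms(1-4) by (simp_all add: lo_def hi_def)
  then have "lo < hi"
    using assms(5,6) by (auto simp: field_simps)
  show ?thesis
  proof
    show "\<forall>x\<in>X. x < (lo + hi) / 2"
    proof
      fix x assume "x \<in> X"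
      then have "x \<le> lo"
        using assms(1) by (simp add: lo_def)
      with \<open>lo < hi\<close> show "x < (lo + hi) / 2"
        by simp
    qed
    have "(lo + hi) / 2 < inverse y" if "y \<in> Y" for y
    proof -
      have "hi \<le> inverse y"
        using assms(3) that by (simp add: hi_def)
      with \<open>lo < hi\<close> show ?thesis
        by simp
    qed
    then show "\<forall>y\<in>Y. y * ((lo + hi) / 2) < 1"
      using assms(5) by (auto simp: field_simps)
  qed
qed

theorem proposition2p15:
  fixes N :: nat and a :: "int \<Rightarrow> real" and c1 c2 :: real
  assumes "N \<ge> 1"
    and "\<forall>j. a (j + int N) = a j"
    and "\<forall>i\<in>{1..int N}. a i > 0"
    and "c1 > 0" and "c2 > 0"
    and "\<forall>i\<in>{1..int N}. \<forall>j\<in>{1..int N}. a i * a j < 1"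
    and "\<forall>i\<in>{1..int N}. a i * c1 < 1"
    and "\<forall>i\<in>{1..int N}. a i * c2 < 1"
    and "c1 * c2 < 1"
  shows "\<exists>Z::real. \<forall>p x. down_right_path N p \<longrightarrow>
           (wt_GP N a c1 c2 p has_sum Z) (configs N x)"
proof -
  obtain \<rho> where lower: "\<forall>\<alpha>\<in>a ` {1..int N} \<union> {c2}. \<alpha> < \<rho>"
    and upper: "\<forall>\<beta>\<in>a ` {1..int N} \<union> {c1}. \<beta> * \<rho> < 1"
    by (rule exists_separating_rate[of "a ` {1..int N} \<union> {c2}" "a ` {1..int N} \<union> {c1}"])
       (use assms in \<open>auto simp: mult.commute\<close>)
  have "(wt_GP N a c1 c2 p has_sum (\<Sum>\<^sub>\<infinity>d. c1 ^ d * transfer_iter c2 (map a [1..int N]) d)) (configs N x)"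
    if "down_right_path N p" for p x
  proof -
    have labels: "mset (map snd (path_steps N a p)) = mset (map a [1..int N])"
      using assms(1,2) that by (rule mset_path_labels)
    then have "set (map snd (path_steps N a p)) = a ` {1..int N}"
      by (metis set_map set_mset_mset set_upto)
    then have admissible: "\<forall>\<alpha>\<in>set (map snd (path_steps N a p)). admissible_rate \<rho> \<alpha>"
      using assms(3) lower upper by (force simp: admissible_rate_def)
    then have "transfer_iter c2 (map snd (path_steps N a p)) = transfer_iter c2 (map a [1..int N])"
      using labels assms(5) lower by (intro transfer_iter_perm) auto
    with has_sum_wt_GP[of N c1 \<rho> c2 a p x] admissible assms(1,4,5) lower upper show ?thesis
      by simp
  qed
  then show ?thesis
    by blast
qed

end
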